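(* Let $c, k$ be natural numbers such that $c$ is not a perfect square and $k$ is even. Then there exists a normal set $A_{c,k} \subseteq \mathbb{N}$ such that for all $x,y \in A_{c,k}$ and every natural number $n$ we have $xy \neq c n^k$.
   Context: $\mathbb{N} = \{1,2,3,\dots\}$. An infinite binary sequence $(\lambda_i)_{i \ge 1}$ is called normal if every finite binary word $\omega$ of length $|\omega|$ occurs in the sequence with asymptotic frequency $2^{-|\omega|}$, i.e. the number of $i \le N$ with $(\lambda_i,\dots,\lambda_{i+|\omega|-1}) = \omega$, divided by $N$, tends to $2^{-|\omega|}$ as $N \to \infty$. A set $B \subseteq \mathbb{N}$ is called normal if its indicator sequence ($\lambda_i = 1$ iff $i \in B$) is normal. *)

theory Defs
  imports Complex_Main
begin

text \<open>A binary sequence indexed by positive integers (values at 0 are ignored):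
  every finite word w occurs, starting at positions i \<in> {1..N}, with asymptotic
  frequency 2^(-|w|).\<close>
definition normal_seq :: "(nat \<Rightarrow> bool) \<Rightarrow> bool" where
  "normal_seq lam \<longleftrightarrow>
     (\<forall>w :: bool list.
        (\<lambda>N. real (card {i \<in> {1..N}. \<forall>j < length w. lam (i + j) = w ! j}) / real N)
          \<longlonglongrightarrow> (1 / 2) ^ length w)"

definition normal_set :: "nat set \<Rightarrow> bool" where
  "normal_set B \<longleftrightarrow> normal_seq (\<lambda>i. i \<in> B)"

end

theory Submission
  imports Defs "HOL-Computational_Algebra.Squarefree" "HOL-Probability.Probability"
    "HOL-Real_Asymp.Real_Asymp"
begin

(*
  Call positive integers x and y related if x y or c x y is a perfect square. Writing sf for the
  squarefree part, the class of x consists of the y with sf y in {sf x, sf (c x)}; as c is not a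
  square these two values differ, which splits the class into two halves. If x y = c n^k with k
  even, then c x y is a square and x y is not, so x and y lie in the same class but in opposite
  halves. Tossing an independent fair coin for every class and letting A consist of the chosen
  halves therefore gives a set without solutions of x y = c n^k.

  Normality holds almost surely. Let S_N count the positions i <= N at which a word w of length L
  occurs. A class meets {1..M} in at most 2 sqrt M elements, and if it contains x < y < x + L then
  sf x <= L c. Hence all but O(sqrt N) windows meet L distinct classes, so that
  E S_N = N 2^(-L) + O(sqrt N); and occurrences at two positions whose windows share no class are
  independent, so that Var S_N = O(N^(3/2)). Chebyshev's inequality and Borel-Cantelli give
  S_N / N -> 2^(-L) along N = k^4, and the monotonicity of S_N fills the gaps.
*)

section \<open>Squarefree parts and the classes\<close>

lemma squarefree_part_pos: "squarefree_part (n :: nat) > 0"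
  by (metis squarefree_part_nonzero gr0I)

lemma squarefree_part_eq_iff_square_product:
  fixes a b :: nat
  assumes "a > 0" "b > 0"
  shows "squarefree_part a = squarefree_part b \<longleftrightarrow> (\<exists>m. a * b = m ^ 2)"
proof
  assume eq: "squarefree_part a = squarefree_part b"
  have "a * b = (squarefree_part a * square_part a * square_part b) ^ 2"
    by (subst (1 2) squarefree_decompose) (simp add: eq power2_eq_square)
  then show "\<exists>m. a * b = m ^ 2" ..
next
  assume "\<exists>m. a * b = m ^ 2"
  then obtain m where m: "a * b = m ^ 2" ..
  with assms have "m \<noteq> 0" by (metis mult_pos_pos power_zero_numeral less_irrefl)
  show "squarefree_part a = squarefree_part b"
  proof (rule multiplicity_eq_nat)
    fix p :: nat assume p: "prime p"
    have "multiplicity p a + multiplicity p b = 2 * multiplicity p m"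
      using p assms \<open>m \<noteq> 0\<close> m
      by (metis prime_elem_multiplicity_mult_distrib prime_elem_multiplicity_power_distrib
          prime_imp_prime_elem not_gr0)
    then show "multiplicity p (squarefree_part a) = multiplicity p (squarefree_part b)"
      using p by (simp add: prime_multiplicity_squarefree_part) presburger
  qed (simp_all add: squarefree_part_pos)
qed

lemma squarefree_part_mult_square:
  fixes a m :: nat
  assumes "m > 0"
  shows "squarefree_part (a * m ^ 2) = squarefree_part a"
proof (cases "a = 0")
  case False
  have "a * m ^ 2 * a = (a * m) ^ 2" by (simp add: power2_eq_square)
  then show ?thesis
    using False assms by (subst squarefree_part_eq_iff_square_product) auto
qed simp

lemma squarefree_part_dvd:
  fixes n :: nat
  shows "squarefree_part n dvd n"
  by (subst (2) squarefree_decompose) simp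

lemma squarefree_part_dvd_gcd_mult:
  fixes c x :: nat
  assumes "c > 0" "x > 0"
  shows "squarefree_part x dvd gcd (squarefree_part x) (squarefree_part (c * x)) * c"
proof (rule multiplicity_le_imp_dvd)
  \<comment> \<open>a prime dividing sf x but not sf (c x) divides c\<close>
  fix p :: nat assume p: "prime p"
  let ?g = "gcd (squarefree_part x) (squarefree_part (c * x))"
  have sx: "multiplicity p (squarefree_part x) = multiplicity p x mod 2"
    and scx: "multiplicity p (squarefree_part (c * x)) =
      (multiplicity p c + multiplicity p x) mod 2"
    using p assms
    by (simp_all add: prime_multiplicity_squarefree_part prime_elem_multiplicity_mult_distrib)
  have "multiplicity p (?g * c) =
      min (multiplicity p x mod 2) ((multiplicity p c + multiplicity p x) mod 2) + multiplicity p c"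
    using p assms
    by (simp add: prime_elem_multiplicity_mult_distrib multiplicity_gcd sx scx)
  then show "multiplicity p (squarefree_part x) \<le> multiplicity p (?g * c)"
    unfolding sx by presburger
qed simp

(*
  For x > 0 the pair {sf x, sf (c x)} labels the class of x, because t -> sf (c t) is an involution
  on squarefree parts; class_rep picks the smaller member of the pair, and class_side says whether
  it is sf x.
*)
definition class_rep :: "nat \<Rightarrow> nat \<Rightarrow> nat" where
  "class_rep c x = min (squarefree_part x) (squarefree_part (c * x))"

definition class_side :: "nat \<Rightarrow> nat \<Rightarrow> bool" where
  "class_side c x \<longleftrightarrow> squarefree_part x < squarefree_part (c * x)"

lemma squarefree_part_mult_cong:
  fixes c x y :: nat
  assumes "c > 0" "x > 0" "y > 0" "squarefree_part x = squarefree_part y"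
  shows "squarefree_part (c * x) = squarefree_part (c * y)"
proof -
  obtain m where "x * y = m ^ 2"
    using assms squarefree_part_eq_iff_square_product by blast
  then have "(c * x) * (c * y) = (c * m) ^ 2" by (simp add: power2_eq_square algebra_simps)
  then show ?thesis using assms by (subst squarefree_part_eq_iff_square_product) auto
qed

lemma squarefree_part_mult_mult:
  fixes c x :: nat
  assumes "c > 0"
  shows "squarefree_part (c * (c * x)) = squarefree_part x"
  using squarefree_part_mult_square[OF assms, of x] by (simp add: power2_eq_square ac_simps)

lemma same_class_squarefree_part:
  fixes c x y :: nat
  assumes "c > 0" "x > 0" "y > 0" "class_rep c x = class_rep c y"
  shows "squarefree_part y = squarefree_part x \<or> squarefree_part y = squarefree_part (c * x)"
proof -
  have "squarefree_part y = squarefree_part (c * x)"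
    if "squarefree_part (c * y) = squarefree_part x"
    using squarefree_part_mult_cong[of c "c * y" x] that assms
    by (simp add: squarefree_part_mult_mult)
  moreover have "squarefree_part y = squarefree_part x"
    if "squarefree_part (c * y) = squarefree_part (c * x)"
    using squarefree_part_mult_cong[of c "c * y" "c * x"] that assms
    by (simp add: squarefree_part_mult_mult)
  ultimately show ?thesis
    using assms(4) unfolding class_rep_def by (auto simp: min_def split: if_splits)
qed

lemma squarefree_part_mult_neq:
  fixes c y :: nat
  assumes c: "\<not> (\<exists>m. c = m ^ 2)" and "y > 0"
  shows "squarefree_part (c * y) \<noteq> squarefree_part y"
proof
  assume "squarefree_part (c * y) = squarefree_part y"
  moreover have "c > 0" using c by (metis gr0I power_zero_numeral)
  ultimately obtain m where m: "c * y * y = m ^ 2"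
    using \<open>y > 0\<close> by (auto simp: squarefree_part_eq_iff_square_product)
  then have "m > 0" using \<open>c > 0\<close> \<open>y > 0\<close> by (metis mult_pos_pos power_zero_numeral gr0I)
  have "squarefree_part c = squarefree_part (c * y ^ 2)"
    using \<open>y > 0\<close> by (simp add: squarefree_part_mult_square)
  also have "\<dots> = squarefree_part (1 * m ^ 2)"
    using m by (simp add: power2_eq_square ac_simps)
  also have "\<dots> = 1" using \<open>m > 0\<close> by (subst squarefree_part_mult_square) simp_all
  finally have "c = square_part c ^ 2"
    using squarefree_decompose[of c] by simp
  with c show False by blast
qed

lemma same_class_opposite_sides:
  fixes c k n x y :: nat
  assumes c: "\<not> (\<exists>m. c = m ^ 2)" and "even k"
    and xy: "x > 0" "y > 0" "x * y = c * n ^ k"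
  shows "class_rep c x = class_rep c y \<and> class_side c x \<noteq> class_side c y"
proof -
  have "c > 0" using c by (metis gr0I power_zero_numeral)
  obtain h where "k = 2 * h" using \<open>even k\<close> ..
  then have "x * (c * y) = (c * n ^ h) ^ 2" and "(c * x) * y = (c * n ^ h) ^ 2"
    using xy(3) by (simp_all add: power_mult_distrib power_mult algebra_simps power2_eq_square)
  then have "squarefree_part x = squarefree_part (c * y)"
    and "squarefree_part (c * x) = squarefree_part y"
    using \<open>c > 0\<close> xy by (simp_all add: squarefree_part_eq_iff_square_product)
  with squarefree_part_mult_neq[OF c \<open>y > 0\<close>] show ?thesis
    unfolding class_rep_def class_side_def by auto
qed

lemma squarefree_part_le_gap_of_same_class:
  fixes c x y :: nat
  assumes "c > 0" "x > 0" "x < y" "class_rep c x = class_rep c y"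
  shows "squarefree_part x \<le> (y - x) * c"
proof -
  define g where "g = gcd (squarefree_part x) (squarefree_part y)"
  have "g dvd y - x"
    unfolding g_def
    by (meson dvd_diff_nat dvd_trans gcd_dvd1 gcd_dvd2 squarefree_part_dvd)
  then have "g \<le> y - x" using assms by (simp add: dvd_imp_le)
  have "squarefree_part x dvd g * c"
    using same_class_squarefree_part[of c x y] assms squarefree_part_dvd_gcd_mult[of c x]
    unfolding g_def by auto
  then have "squarefree_part x \<le> g * c"
    using assms by (intro dvd_imp_le) (auto simp: g_def squarefree_part_pos)
  also have "\<dots> \<le> (y - x) * c" using \<open>g \<le> y - x\<close> by simp
  finally show ?thesis .
qed

section \<open>Counting elements of a class\<close>

lemma card_squarefree_part_eq_le:
  fixes M t :: nat
  shows "real (card {y \<in> {1..M}. squarefree_part y = t}) \<le> sqrt M"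
proof -
  let ?Y = "{y \<in> {1..M}. squarefree_part y = t}"
  have "inj_on square_part ?Y"
    by (rule inj_onI, rule squarefree_decomposition_unique) auto
  moreover have "square_part ` ?Y \<subseteq> {1..nat \<lfloor>sqrt M\<rfloor>}"
  proof safe
    fix y assume y: "y \<in> {1..M}"
    then have "square_part y ^ 2 \<le> M"
      using dvd_imp_le[OF square_part_square_dvd[of y]] by simp
    then have "real (square_part y) \<le> sqrt M"
      by (simp add: real_le_rsqrt flip: of_nat_power)
    moreover have "square_part y > 0"
      using y by (metis square_part_0_iff gr0I atLeastAtMost_iff not_one_le_zero)
    ultimately show "square_part y \<in> {1..nat \<lfloor>sqrt M\<rfloor>}"
      by (auto simp: le_nat_floor)
  qed
  ultimately have "card ?Y \<le> nat \<lfloor>sqrt M\<rfloor>"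
    using card_mono[of "{1..nat \<lfloor>sqrt M\<rfloor>}" "square_part ` ?Y"] by (simp add: card_image)
  then have "real (card ?Y) \<le> real (nat \<lfloor>sqrt M\<rfloor>)" by (simp only: of_nat_le_iff)
  also have "\<dots> \<le> sqrt M" by simp
  finally show ?thesis .
qed

lemma card_same_class_le:
  fixes c x M :: nat
  assumes "c > 0" "x > 0"
  shows "real (card {y \<in> {1..M}. class_rep c y = class_rep c x}) \<le> 2 * sqrt M"
proof -
  have "{y \<in> {1..M}. class_rep c y = class_rep c x} \<subseteq>
      {y \<in> {1..M}. squarefree_part y = squarefree_part x} \<union>
      {y \<in> {1..M}. squarefree_part y = squarefree_part (c * x)}"
  proof
    fix y assume "y \<in> {y \<in> {1..M}. class_rep c y = class_rep c x}"
    then show "y \<in> {y \<in> {1..M}. squarefree_part y = squarefree_part x} \<union>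
        {y \<in> {1..M}. squarefree_part y = squarefree_part (c * x)}"
      using assms same_class_squarefree_part[of c x y] by auto
  qed
  then have "card {y \<in> {1..M}. class_rep c y = class_rep c x} \<le>
      card ({y \<in> {1..M}. squarefree_part y = squarefree_part x} \<union>
        {y \<in> {1..M}. squarefree_part y = squarefree_part (c * x)})"
    by (intro card_mono) auto
  also have "\<dots> \<le> card {y \<in> {1..M}. squarefree_part y = squarefree_part x} +
      card {y \<in> {1..M}. squarefree_part y = squarefree_part (c * x)}"
    by (rule card_Un_le)
  finally show ?thesis
    using card_squarefree_part_eq_le[of M "squarefree_part x"]
      card_squarefree_part_eq_le[of M "squarefree_part (c * x)"] by linarith
qed

lemma card_pairs_same_class_le:
  fixes c M :: nat
  assumes "c > 0"
  shows "real (card {(x, y). x \<in> {1..M} \<and> y \<in> {1..M} \<and> class_rep c x = class_rep c y})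
      \<le> 2 * M * sqrt M"
proof -
  have "{(x, y). x \<in> {1..M} \<and> y \<in> {1..M} \<and> class_rep c x = class_rep c y} =
      Sigma {1..M} (\<lambda>x. {y \<in> {1..M}. class_rep c y = class_rep c x})"
    by auto
  then have "card {(x, y). x \<in> {1..M} \<and> y \<in> {1..M} \<and> class_rep c x = class_rep c y} =
      (\<Sum>x\<in>{1..M}. card {y \<in> {1..M}. class_rep c y = class_rep c x})"
    by (simp add: card_SigmaI)
  also have "real \<dots> \<le> (\<Sum>x\<in>{1..M}. 2 * sqrt M)"
    unfolding of_nat_sum using assms by (intro sum_mono card_same_class_le) auto
  finally show ?thesis by simp
qed

lemma card_close_same_class_le:
  fixes c L M :: nat
  assumes "c > 0"
  shows "real (card {x \<in> {1..M}. \<exists>y. x < y \<and> y < x + L \<and> class_rep c x = class_rep c y})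
      \<le> L * c * sqrt M"
proof -
  have "{x \<in> {1..M}. \<exists>y. x < y \<and> y < x + L \<and> class_rep c x = class_rep c y} \<subseteq>
      (\<Union>t\<in>{1..L * c}. {y \<in> {1..M}. squarefree_part y = t})"
  proof clarify
    fix x y assume x: "x \<in> {1..M}" and y: "x < y" "y < x + L" "class_rep c x = class_rep c y"
    have "squarefree_part x \<le> (y - x) * c"
      using squarefree_part_le_gap_of_same_class[of c x y] assms x y by simp
    also have "\<dots> \<le> L * c" using y by (intro mult_right_mono) auto
    finally show "x \<in> (\<Union>t\<in>{1..L * c}. {y \<in> {1..M}. squarefree_part y = t})"
      using x squarefree_part_pos[of x] by (auto simp: Suc_le_eq)
  qed
  then have "card {x \<in> {1..M}. \<exists>y. x < y \<and> y < x + L \<and> class_rep c x = class_rep c y} \<le>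
      card (\<Union>t\<in>{1..L * c}. {y \<in> {1..M}. squarefree_part y = t})"
    by (intro card_mono) auto
  also have "\<dots> \<le> (\<Sum>t\<in>{1..L * c}. card {y \<in> {1..M}. squarefree_part y = t})"
    by (rule card_UN_le) simp
  also have "real \<dots> \<le> (\<Sum>t\<in>{1..L * c}. sqrt M)"
    unfolding of_nat_sum by (intro sum_mono card_squarefree_part_eq_le)
  finally show ?thesis by simp
qed

lemma card_non_injective_windows_le:
  fixes c L N :: nat
  assumes "c > 0"
  shows "real (card {i \<in> {1..N}. \<not> inj_on (class_rep c) {i..<i + L}}) \<le> L * (L * c * sqrt (N + L))"
proof -
  let ?C = "{x \<in> {1..N + L}. \<exists>y. x < y \<and> y < x + L \<and> class_rep c x = class_rep c y}"
  have "{i \<in> {1..N}. \<not> inj_on (class_rep c) {i..<i + L}} \<subseteq> (\<Union>t<L. (\<lambda>x. x - t) ` ?C)"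
  proof clarify
    fix i assume i: "i \<in> {1..N}" "\<not> inj_on (class_rep c) {i..<i + L}"
    then obtain x y where xy: "x \<in> {i..<i + L}" "y \<in> {i..<i + L}" "x < y"
      "class_rep c x = class_rep c y"
      unfolding inj_on_def by (metis linorder_neqE_nat)
    then have "x \<in> ?C" using i by auto
    moreover have "i = x - (x - i)" "x - i < L" using xy by auto
    ultimately show "i \<in> (\<Union>t<L. (\<lambda>x. x - t) ` ?C)" by blast
  qed
  then have "card {i \<in> {1..N}. \<not> inj_on (class_rep c) {i..<i + L}} \<le> card (\<Union>t<L. (\<lambda>x. x - t) ` ?C)"
    by (intro card_mono) auto
  also have "\<dots> \<le> (\<Sum>t<L. card ((\<lambda>x. x - t) ` ?C))"
    by (rule card_UN_le) simp
  also have "\<dots> \<le> (\<Sum>t<L. card ?C)"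
    by (intro sum_mono card_image_le) simp
  finally have "real (card {i \<in> {1..N}. \<not> inj_on (class_rep c) {i..<i + L}}) \<le> L * real (card ?C)"
    by (simp flip: of_nat_mult)
  also have "\<dots> \<le> L * (L * c * sqrt (N + L))"
    using card_close_same_class_le[OF assms, of "N + L" L] by (intro mult_left_mono) auto
  finally show ?thesis .
qed

definition windows_overlap :: "nat \<Rightarrow> nat \<Rightarrow> nat \<Rightarrow> nat \<Rightarrow> bool" where
  "windows_overlap c L i j \<longleftrightarrow> class_rep c ` {i..<i + L} \<inter> class_rep c ` {j..<j + L} \<noteq> {}"

lemma card_overlapping_windows_le:
  fixes c L N :: nat
  assumes "c > 0"
  shows "real (card {(i, j) \<in> {1..N} \<times> {1..N}. windows_overlap c L i j})
      \<le> L ^ 2 * (2 * (N + L) * sqrt (N + L))"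
proof -
  let ?P = "{(x, y). x \<in> {1..N + L} \<and> y \<in> {1..N + L} \<and> class_rep c x = class_rep c y}"
  let ?shift = "\<lambda>s t (x, y). (x - s, y - t :: nat)"
  have fin: "finite ?P" by (rule finite_subset[of _ "{1..N + L} \<times> {1..N + L}"]) auto
  have "{(i, j) \<in> {1..N} \<times> {1..N}. windows_overlap c L i j}
      \<subseteq> (\<Union>s<L. \<Union>t<L. ?shift s t ` ?P)"
  proof
    fix p assume "p \<in> {(i, j) \<in> {1..N} \<times> {1..N}. windows_overlap c L i j}"
    then obtain i j x y where p: "p = (i, j)" and ij: "i \<in> {1..N}" "j \<in> {1..N}"
      and xy: "x \<in> {i..<i + L}" "y \<in> {j..<j + L}" "class_rep c x = class_rep c y"
      unfolding windows_overlap_def by blast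
    then have "(x, y) \<in> ?P" by auto
    moreover have "(i, j) = ?shift (x - i) (y - j) (x, y)" "x - i < L" "y - j < L" using xy by auto
    ultimately show "p \<in> (\<Union>s<L. \<Union>t<L. ?shift s t ` ?P)" unfolding p by blast
  qed
  then have "card {(i, j) \<in> {1..N} \<times> {1..N}. windows_overlap c L i j}
      \<le> card (\<Union>s<L. \<Union>t<L. ?shift s t ` ?P)"
    by (intro card_mono) (use fin in auto)
  also have "\<dots> \<le> (\<Sum>s<L. \<Sum>t<L. card (?shift s t ` ?P))"
    by (intro order_trans[OF card_UN_le] sum_mono card_UN_le) auto
  also have "\<dots> \<le> (\<Sum>s<L. \<Sum>t<L. card ?P)"
    by (intro sum_mono card_image_le fin)
  finally have "real (card {(i, j) \<in> {1..N} \<times> {1..N}. windows_overlap c L i j})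
      \<le> L ^ 2 * real (card ?P)"
    by (simp add: power2_eq_square flip: of_nat_mult)
  also have "\<dots> \<le> L ^ 2 * (2 * (N + L) * sqrt (N + L))"
    using card_pairs_same_class_le[OF assms, of "N + L"] by (intro mult_left_mono) auto
  finally show ?thesis .
qed

section \<open>A strong law of large numbers for weakly dependent events\<close>

lemma nat_root_floorE:
  fixes d :: nat
  assumes "d > 0"
  obtains r :: "nat \<Rightarrow> nat"
  where "\<And>N. r N ^ d \<le> N" "\<And>N. N < Suc (r N) ^ d" "filterlim r at_top sequentially"
proof -
  have "\<exists>m. m ^ d \<le> N \<and> N < Suc m ^ d" for N
  proof -
    have "Suc N \<le> Suc N ^ d"
      using assms by (simp add: self_le_power)
    moreover have "\<not> N < 0 ^ d" using assms by (simp add: zero_power)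
    ultimately obtain m where "\<forall>i\<le>m. \<not> N < i ^ d" "N < Suc m ^ d"
      using ex_least_nat_less[of "\<lambda>m. N < m ^ d" "Suc N"] by auto
    then show ?thesis by (auto simp: not_less)
  qed
  then obtain r where r: "\<And>N. r N ^ d \<le> N" "\<And>N. N < Suc (r N) ^ d"
    by metis
  moreover have "filterlim r at_top sequentially"
    unfolding filterlim_at_top eventually_sequentially
  proof (intro allI exI impI)
    fix B N :: nat assume "B ^ d \<le> N"
    show "B \<le> r N"
    proof (rule ccontr)
      assume "\<not> B \<le> r N"
      then have "Suc (r N) ^ d \<le> B ^ d" by (intro power_mono) auto
      then show False using r(2)[of N] \<open>B ^ d \<le> N\<close> by linarith
    qed
  qed
  ultimately show ?thesis using that by blast
qed

lemma mono_div_between_powers: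
  fixes S :: "nat \<Rightarrow> real"
  assumes mono: "mono S" and nonneg: "\<And>n. S n \<ge> 0"
    and "m > 0" "m ^ d \<le> N" "N < Suc m ^ d"
  shows "S (m ^ d) / real (Suc m) ^ d \<le> S N / N" "S N / N \<le> S (Suc m ^ d) / real m ^ d"
proof -
  have S: "S (m ^ d) \<le> S N" "S N \<le> S (Suc m ^ d)"
    using assms(4,5) mono by (auto simp: mono_def)
  have N: "real m ^ d \<le> N" "N \<le> real (Suc m) ^ d"
    using assms(4,5) by (simp_all only: of_nat_le_iff less_imp_le flip: of_nat_power)
  have "real m ^ d > 0" using \<open>m > 0\<close> by simp
  with N have "real N > 0" by linarith
  have "S (m ^ d) / real (Suc m) ^ d \<le> S N / real (Suc m) ^ d"
    using S by (intro divide_right_mono) auto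
  also have "\<dots> \<le> S N / N"
    using N \<open>real N > 0\<close> nonneg by (intro divide_left_mono) auto
  finally show "S (m ^ d) / real (Suc m) ^ d \<le> S N / N" .
  have "S N / N \<le> S N / real m ^ d"
    using N \<open>real N > 0\<close> \<open>real m ^ d > 0\<close> by (intro divide_left_mono nonneg mult_pos_pos)
  also have "\<dots> \<le> S (Suc m ^ d) / real m ^ d"
    using S by (intro divide_right_mono) auto
  finally show "S N / N \<le> S (Suc m ^ d) / real m ^ d" .
qed

lemma tendsto_div_of_mono_power_subseq:
  fixes S :: "nat \<Rightarrow> real" and d :: nat
  assumes mono: "mono S" and nonneg: "\<And>n. S n \<ge> 0" and "d > 0"
    and lim: "(\<lambda>m. S (m ^ d) / real m ^ d) \<longlonglongrightarrow> \<mu>"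
  shows "(\<lambda>N. S N / N) \<longlonglongrightarrow> \<mu>"
proof -
  obtain r where r: "\<And>N. r N ^ d \<le> N" "\<And>N. N < Suc (r N) ^ d"
    and r_lim: "filterlim r at_top sequentially"
    using nat_root_floorE[OF \<open>d > 0\<close>] by blast
  define lo where "lo m = S (m ^ d) / real m ^ d * (real m / real (Suc m)) ^ d" for m
  define hi where "hi m = S (Suc m ^ d) / real (Suc m) ^ d * (real (Suc m) / real m) ^ d" for m
  have "lo \<longlonglongrightarrow> \<mu> * 1 ^ d"
    unfolding lo_def using lim by (intro tendsto_mult tendsto_power LIMSEQ_n_over_Suc_n)
  moreover have "hi \<longlonglongrightarrow> \<mu> * 1 ^ d"
    unfolding hi_def using lim[THEN LIMSEQ_Suc]
    by (intro tendsto_mult tendsto_power LIMSEQ_Suc_n_over_n) (simp_all del: of_nat_Suc)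
  ultimately have lo_lim: "(\<lambda>N. lo (r N)) \<longlonglongrightarrow> \<mu>" and hi_lim: "(\<lambda>N. hi (r N)) \<longlonglongrightarrow> \<mu>"
    using r_lim by (simp_all add: filterlim_compose)
  have "lo (r N) \<le> S N / N \<and> S N / N \<le> hi (r N)" if "N \<ge> 1" for N
  proof -
    have "r N > 0" using r(2)[of N] that \<open>d > 0\<close> by (cases "r N") auto
    then show ?thesis
      using mono_div_between_powers[OF mono nonneg _ r(1,2)]
      unfolding lo_def hi_def by (simp add: power_divide)
  qed
  then have "eventually (\<lambda>N. lo (r N) \<le> S N / N) sequentially"
    and "eventually (\<lambda>N. S N / N \<le> hi (r N)) sequentially"
    unfolding eventually_sequentially by blast+
  from this lo_lim hi_lim show ?thesis by (rule tendsto_sandwich)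
qed

lemma tendsto_div_of_sqrt_deviation:
  fixes a :: "nat \<Rightarrow> real" and K p :: real and L :: nat
  assumes dev: "\<And>N. \<bar>a N - N * p\<bar> \<le> K * sqrt (N + L)"
  shows "(\<lambda>N. a N / N) \<longlonglongrightarrow> p"
proof -
  have bound: "norm (a N / N - p) \<le> K * (sqrt (N + L) / N)" if "N \<ge> 1" for N
  proof -
    have "a N / N - p = (a N - N * p) / N"
      using that by (simp add: field_simps)
    then show ?thesis
      using dev[of N] by (simp add: abs_divide divide_right_mono)
  qed
  have sqrt_lim: "(\<lambda>N. sqrt (real N + real L) / real N) \<longlonglongrightarrow> 0"
    by real_asymp
  have K_lim: "(\<lambda>N. K * (sqrt (N + L) / N)) \<longlonglongrightarrow> 0"
    using tendsto_mult_right_zero[OF sqrt_lim, of K] by simp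
  have "eventually (\<lambda>N. norm (a N / N - p) \<le> K * (sqrt (N + L) / N)) sequentially"
    unfolding eventually_sequentially using bound by blast
  from Lim_null_comparison[OF this K_lim] show ?thesis
    by (simp add: LIM_zero_iff)
qed

lemma tendsto_zero_if_eventually_abs_less_inverse_Suc:
  fixes f :: "'a \<Rightarrow> real"
  assumes "\<And>r. eventually (\<lambda>x. \<bar>f x\<bar> < inverse (Suc r)) F"
  shows "(f \<longlongrightarrow> 0) F"
proof (rule tendstoI)
  fix \<epsilon> :: real assume "\<epsilon> > 0"
  then obtain r where "inverse (Suc r) < \<epsilon>"
    using reals_Archimedean by blast
  with assms[of r] show "eventually (\<lambda>x. dist (f x) 0 < \<epsilon>) F"
    by (auto elim: eventually_mono)
qed

lemma (in prob_space) integrable_sum_indicator: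
  fixes E :: "'i \<Rightarrow> 'a set"
  assumes "\<And>i. i \<in> I \<Longrightarrow> E i \<in> events"
  shows "integrable M (\<lambda>\<omega>. \<Sum>i\<in>I. indicator (E i) \<omega> :: real)"
  using assms
  by (auto simp: integrable_indicator_iff Int_absorb2 emeasure_finite less_top[symmetric]
      intro!: Bochner_Integration.integrable_sum)

lemma (in prob_space) expectation_sum_indicator:
  fixes E :: "'i \<Rightarrow> 'a set"
  assumes "finite I" "\<And>i. i \<in> I \<Longrightarrow> E i \<in> events"
  shows "expectation (\<lambda>\<omega>. \<Sum>i\<in>I. indicator (E i) \<omega> :: real) = (\<Sum>i\<in>I. prob (E i))"
  using assms
  by (simp add: Bochner_Integration.integral_sum integrable_indicator_iff Int_absorb2
      emeasure_finite less_top[symmetric])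

lemma sum_indicator_squared:
  "(\<Sum>i\<in>I. indicator (E i) \<omega> :: real)\<^sup>2 = (\<Sum>i\<in>I. \<Sum>j\<in>I. indicator (E i \<inter> E j) \<omega>)"
  by (simp add: power2_eq_square sum_product indicator_inter_arith)

lemma (in prob_space) integrable_sum_indicator_squared:
  fixes E :: "'i \<Rightarrow> 'a set"
  assumes "\<And>i. i \<in> I \<Longrightarrow> E i \<in> events"
  shows "integrable M (\<lambda>\<omega>. (\<Sum>i\<in>I. indicator (E i) \<omega> :: real)\<^sup>2)"
  unfolding sum_indicator_squared
  by (rule Bochner_Integration.integrable_sum, rule integrable_sum_indicator) (use assms in auto)

lemma (in prob_space) variance_sum_indicator_le:
  fixes E :: "'i \<Rightarrow> 'a set" and R :: "'i \<Rightarrow> 'i \<Rightarrow> bool"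
  assumes "finite I" and E: "\<And>i. i \<in> I \<Longrightarrow> E i \<in> events"
    and indep: "\<And>i j. i \<in> I \<Longrightarrow> j \<in> I \<Longrightarrow> \<not> R i j \<Longrightarrow> prob (E i \<inter> E j) = prob (E i) * prob (E j)"
  shows "variance (\<lambda>\<omega>. \<Sum>i\<in>I. indicator (E i) \<omega> :: real) \<le> card {(i, j) \<in> I \<times> I. R i j}"
proof -
  let ?S = "\<lambda>\<omega>. \<Sum>i\<in>I. indicator (E i) \<omega> :: real"
  have "expectation (\<lambda>\<omega>. (?S \<omega>)\<^sup>2) = (\<Sum>i\<in>I. expectation (\<lambda>\<omega>. \<Sum>j\<in>I. indicator (E i \<inter> E j) \<omega>))"
    unfolding sum_indicator_squared using E
    by (intro Bochner_Integration.integral_sum integrable_sum_indicator) auto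
  also have "\<dots> = (\<Sum>i\<in>I. \<Sum>j\<in>I. prob (E i \<inter> E j))"
    using E \<open>finite I\<close> by (intro sum.cong refl expectation_sum_indicator) auto
  finally have "variance ?S = (\<Sum>i\<in>I. \<Sum>j\<in>I. prob (E i \<inter> E j)) - (\<Sum>i\<in>I. prob (E i))\<^sup>2"
    using E \<open>finite I\<close>
    by (subst variance_eq) (simp_all add: integrable_sum_indicator
        integrable_sum_indicator_squared expectation_sum_indicator)
  also have "\<dots> = (\<Sum>i\<in>I. \<Sum>j\<in>I. prob (E i \<inter> E j) - prob (E i) * prob (E j))"
    by (simp add: power2_eq_square sum_product sum_subtractf)
  also have "\<dots> \<le> (\<Sum>i\<in>I. \<Sum>j\<in>I. if R i j then 1 else 0)"
  proof (intro sum_mono)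
    fix i j assume "i \<in> I" "j \<in> I"
    have "prob (E i \<inter> E j) \<le> 1" "0 \<le> prob (E i) * prob (E j)" by simp_all
    then have "prob (E i \<inter> E j) - prob (E i) * prob (E j) \<le> 1" by linarith
    then show "prob (E i \<inter> E j) - prob (E i) * prob (E j) \<le> (if R i j then 1 else 0)"
      using indep \<open>i \<in> I\<close> \<open>j \<in> I\<close> by auto
  qed
  also have "\<dots> = (\<Sum>i\<in>I. card {j \<in> I. R i j})"
    using \<open>finite I\<close> by (simp add: sum.If_cases Int_def)
  also have "\<dots> = card (SIGMA i:I. {j \<in> I. R i j})"
    using \<open>finite I\<close> by (simp add: card_SigmaI)
  also have "(SIGMA i:I. {j \<in> I. R i j}) = {(i, j) \<in> I \<times> I. R i j}"
    by auto
  finally show ?thesis .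
qed

lemma (in prob_space) prob_deviation_ge_le:
  fixes Y :: "'a \<Rightarrow> real"
  assumes "random_variable borel Y" "integrable M (\<lambda>\<omega>. (Y \<omega>)\<^sup>2)"
    and var: "variance Y \<le> C * n * sqrt n" and "n > 0" "a > 0"
  shows "prob {\<omega> \<in> space M. \<bar>Y \<omega> - expectation Y\<bar> \<ge> a * n} \<le> C / (a\<^sup>2 * sqrt n)"
proof -
  have "prob {\<omega> \<in> space M. \<bar>Y \<omega> - expectation Y\<bar> \<ge> a * n} \<le> variance Y / (a * n)\<^sup>2"
    using assms by (intro Chebyshev_inequality) auto
  also have "\<dots> \<le> C * n * sqrt n / (a * n)\<^sup>2"
    using var by (intro divide_right_mono) auto
  also have "\<dots> = C / (a\<^sup>2 * sqrt n)"
  proof -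
    have "sqrt n > 0" "n = (sqrt n)\<^sup>2" using \<open>n > 0\<close> by simp_all
    then show ?thesis
      using \<open>a > 0\<close> by (subst (1 2) \<open>n = (sqrt n)\<^sup>2\<close>) (simp add: field_simps power2_eq_square)
  qed
  finally show ?thesis .
qed

lemma (in prob_space) AE_deviation_along_fourth_powers:
  fixes X :: "nat \<Rightarrow> 'a \<Rightarrow> real" and C :: real
  assumes [measurable]: "\<And>N. X N \<in> borel_measurable M"
    and int: "\<And>N. integrable M (\<lambda>\<omega>. (X N \<omega>)\<^sup>2)"
    and var: "\<And>N. variance (X N) \<le> C * N * sqrt N"
  shows "AE \<omega> in M. (\<lambda>k. (X (k ^ 4) \<omega> - expectation (X (k ^ 4))) / real k ^ 4) \<longlonglongrightarrow> 0"
proof -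
  define B where "B r k =
    {\<omega> \<in> space M. \<bar>X (k ^ 4) \<omega> - expectation (X (k ^ 4))\<bar> \<ge> inverse (Suc r) * real (k ^ 4)}"
    for r k :: nat
  \<comment> \<open>along \<open>N = k ^ 4\<close> the Chebyshev bounds \<open>C (r + 1)\<^sup>2 / k\<^sup>2\<close> are summable\<close>
  have "summable (\<lambda>k. prob (B r k))" for r
  proof (rule summable_comparison_test')
    show "summable (\<lambda>k. C * real (Suc r) ^ 2 * inverse (real k ^ 2))"
      by (intro summable_mult inverse_power_summable) simp
    have "sqrt (real (k ^ 4)) = real k ^ 2" for k
      by (rule real_sqrt_unique) simp_all
    then show "norm (prob (B r k)) \<le> C * real (Suc r) ^ 2 * inverse (real k ^ 2)" if "k \<ge> 1" for k
      using prob_deviation_ge_le[OF _ int var, of "k ^ 4" "inverse (Suc r)"] that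
      unfolding B_def by (simp add: field_simps)
  qed
  then have "AE \<omega> in M. eventually (\<lambda>k. \<omega> \<in> space M - B r k) sequentially" for r
    by (intro borel_cantelli_AE1) (auto simp: B_def emeasure_finite less_top[symmetric])
  then have "AE \<omega> in M. \<forall>r. eventually (\<lambda>k. \<omega> \<in> space M - B r k) sequentially"
    by (simp add: AE_all_countable)
  then show ?thesis
  proof eventually_elim
    case (elim \<omega>)
    show ?case
    proof (rule tendsto_zero_if_eventually_abs_less_inverse_Suc)
      fix r
      from elim[rule_format, of r] eventually_gt_at_top[of 0]
      show "eventually (\<lambda>k. \<bar>(X (k ^ 4) \<omega> - expectation (X (k ^ 4))) / real k ^ 4\<bar>
          < inverse (Suc r)) sequentially"
        by eventually_elim (simp add: B_def abs_divide divide_less_eq not_le)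
    qed
  qed
qed

lemma (in prob_space) AE_frequency_tendsto:
  fixes E :: "nat \<Rightarrow> 'a set" and \<mu> C :: real
  assumes E: "\<And>i. E i \<in> events"
    and mean: "(\<lambda>N. (\<Sum>i=1..N. prob (E i)) / N) \<longlonglongrightarrow> \<mu>"
    and var: "\<And>N. variance (\<lambda>\<omega>. \<Sum>i=1..N. indicator (E i) \<omega>) \<le> C * N * sqrt N"
  shows "AE \<omega> in M. (\<lambda>N. card {i \<in> {1..N}. \<omega> \<in> E i} / N) \<longlonglongrightarrow> \<mu>"
proof -
  define S where "S N = (\<lambda>\<omega>. \<Sum>i=1..N. indicator (E i) \<omega> :: real)" for N
  have S_card: "S N \<omega> = card {i \<in> {1..N}. \<omega> \<in> E i}" for N \<omega>
    unfolding S_def indicator_def by (simp add: sum.If_cases Int_def)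
  have dev: "AE \<omega> in M. (\<lambda>k. (S (k ^ 4) \<omega> - expectation (S (k ^ 4))) / real k ^ 4) \<longlonglongrightarrow> 0"
  proof (rule AE_deviation_along_fourth_powers)
    show "S N \<in> borel_measurable M" for N
      unfolding S_def using E by measurable
    show "integrable M (\<lambda>\<omega>. (S N \<omega>)\<^sup>2)" for N
      unfolding S_def using E by (rule integrable_sum_indicator_squared)
  qed (use var in \<open>simp add: S_def\<close>)
  have mean4: "(\<lambda>k. expectation (S (k ^ 4)) / real k ^ 4) \<longlonglongrightarrow> \<mu>"
  proof -
    have "strict_mono (\<lambda>k::nat. k ^ 4)"
      by (intro strict_monoI power_strict_mono) auto
    from LIMSEQ_subseq_LIMSEQ[OF mean this] show ?thesis
      using E by (simp add: S_def expectation_sum_indicator o_def)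
  qed
  from dev show ?thesis
  proof eventually_elim
    case (elim \<omega>)
    have "(\<lambda>k. S (k ^ 4) \<omega> / real k ^ 4) \<longlonglongrightarrow> 0 + \<mu>"
      using tendsto_add[OF elim mean4] by (simp add: diff_divide_distrib)
    then have "(\<lambda>N. S N \<omega> / N) \<longlonglongrightarrow> \<mu>"
      by (intro tendsto_div_of_mono_power_subseq[of "\<lambda>N. S N \<omega>" 4])
        (auto simp: S_card mono_def intro!: card_mono)
    then show ?case by (simp add: S_card)
  qed
qed

section \<open>Fair coins\<close>

definition coins :: "(nat \<Rightarrow> bool) measure" where
  "coins = PiM UNIV (\<lambda>_. measure_pmf (bernoulli_pmf (1 / 2)))"

interpretation coins: prob_space coins
  unfolding coins_def by (intro prob_space_PiM prob_space_measure_pmf)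

lemma space_coins [simp]: "space coins = UNIV"
  by (simp add: coins_def space_PiM)

definition pattern_event :: "('i \<Rightarrow> nat) \<Rightarrow> ('i \<Rightarrow> bool) \<Rightarrow> 'i set \<Rightarrow> (nat \<Rightarrow> bool) set" where
  "pattern_event f g T = {\<omega>. \<forall>t\<in>T. \<omega> (f t) = g t}"

lemma pattern_event_in_coins [measurable]:
  assumes "finite T"
  shows "pattern_event f g T \<in> coins.events"
proof -
  have "Measurable.pred coins (\<lambda>\<omega>. \<forall>t\<in>T. \<omega> (f t) = g t)"
    using assms unfolding coins_def by measurable
  then show ?thesis by (simp add: pred_def pattern_event_def)
qed

lemma pattern_event_eq_cylinder:
  assumes "\<And>t t'. t \<in> T \<Longrightarrow> t' \<in> T \<Longrightarrow> f t = f t' \<Longrightarrow> g t = g t'"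
  shows "pattern_event f g T = pattern_event id (\<lambda>a. \<exists>t\<in>T. f t = a \<and> g t) (f ` T)"
proof -
  have "(\<exists>t'\<in>T. f t' = f t \<and> g t') = g t" if "t \<in> T" for t
    using assms that by blast
  then show ?thesis by (simp add: pattern_event_def)
qed

lemma pattern_event_eq_empty:
  assumes "t \<in> T" "t' \<in> T" "f t = f t'" "g t \<noteq> g t'"
  shows "pattern_event f g T = {}"
proof -
  have False if "\<forall>t\<in>T. \<omega> (f t) = g t" for \<omega>
    using that assms by metis
  then show ?thesis unfolding pattern_event_def by blast
qed

lemma prob_coins_cylinder:
  assumes "finite F"
  shows "coins.prob (pattern_event id v F) = (1 / 2) ^ card F"
proof -
  interpret product_prob_space "\<lambda>_::nat. measure_pmf (bernoulli_pmf (1 / 2))" UNIV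
    by unfold_locales
  have "emeasure coins {\<omega> \<in> space coins. \<forall>a\<in>F. \<omega> a \<in> {v a}} =
      (\<Prod>a\<in>F. emeasure (measure_pmf (bernoulli_pmf (1 / 2))) {v a})"
    unfolding coins_def using assms by (intro emeasure_PiM_Collect) auto
  also have "\<dots> = (\<Prod>a\<in>F. ennreal (1 / 2))"
    by (intro prod.cong refl)
      (simp add: emeasure_pmf_single pmf_bernoulli_False split: bool.split)
  also have "\<dots> = ennreal ((1 / 2) ^ card F)"
    by (subst prod_ennreal) auto
  finally have "ennreal (coins.prob (pattern_event id v F)) = ennreal ((1 / 2) ^ card F)"
    by (simp add: coins.emeasure_eq_measure pattern_event_def)
  then show ?thesis by simp
qed

lemma prob_coins_cylinder_Int:
  assumes "finite F" "finite G" "F \<inter> G = {}"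
  shows "coins.prob (pattern_event id u F \<inter> pattern_event id v G) =
    coins.prob (pattern_event id u F) * coins.prob (pattern_event id v G)"
proof -
  have "pattern_event id u F \<inter> pattern_event id v G =
      pattern_event id (\<lambda>a. if a \<in> F then u a else v a) (F \<union> G)"
    using assms(3) by (auto simp: pattern_event_def)
  then show ?thesis
    using assms by (simp add: prob_coins_cylinder card_Un_disjoint power_add)
qed

lemma prob_coins_pattern_inj:
  assumes "finite T" "inj_on f T"
  shows "coins.prob (pattern_event f g T) = (1 / 2) ^ card T"
proof -
  have "g t = g t'" if "t \<in> T" "t' \<in> T" "f t = f t'" for t t'
    using inj_onD[OF assms(2) that(3,1,2)] by simp
  then have "pattern_event f g T = pattern_event id (\<lambda>a. \<exists>t\<in>T. f t = a \<and> g t) (f ` T)"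
    by (rule pattern_event_eq_cylinder)
  then show ?thesis
    using assms by (simp add: prob_coins_cylinder card_image)
qed

lemma prob_coins_pattern_Int:
  assumes "finite T" "finite U" "f ` T \<inter> f' ` U = {}"
  shows "coins.prob (pattern_event f g T \<inter> pattern_event f' g' U) =
    coins.prob (pattern_event f g T) * coins.prob (pattern_event f' g' U)"
proof (cases "\<exists>t\<in>T. \<exists>t'\<in>T. f t = f t' \<and> g t \<noteq> g t'")
  case True
  then obtain t t' where "t \<in> T" "t' \<in> T" "f t = f t'" "g t \<noteq> g t'" by blast
  then have "pattern_event f g T = {}" by (rule pattern_event_eq_empty)
  then show ?thesis by simp
next
  case consistent_T: False
  show ?thesis
  proof (cases "\<exists>t\<in>U. \<exists>t'\<in>U. f' t = f' t' \<and> g' t \<noteq> g' t'")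
    case True
    then obtain t t' where "t \<in> U" "t' \<in> U" "f' t = f' t'" "g' t \<noteq> g' t'" by blast
    then have "pattern_event f' g' U = {}" by (rule pattern_event_eq_empty)
    then show ?thesis by simp
  next
    case False
    have "pattern_event f g T = pattern_event id (\<lambda>a. \<exists>t\<in>T. f t = a \<and> g t) (f ` T)"
      using consistent_T by (intro pattern_event_eq_cylinder) blast
    moreover have "pattern_event f' g' U = pattern_event id (\<lambda>a. \<exists>t\<in>U. f' t = a \<and> g' t) (f' ` U)"
      using False by (intro pattern_event_eq_cylinder) blast
    ultimately show ?thesis
      using assms by (simp add: prob_coins_cylinder_Int)
  qed
qed

section \<open>The random set\<close>

definition window_event :: "nat \<Rightarrow> bool list \<Rightarrow> nat \<Rightarrow> (nat \<Rightarrow> bool) set" where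
  "window_event c w i =
    pattern_event (class_rep c) (\<lambda>x. class_side c x = w ! (x - i)) {i..<i + length w}"

(* The coin with index class_rep c x decides which half of the class of x enters the set. *)
definition coin_set :: "nat \<Rightarrow> (nat \<Rightarrow> bool) \<Rightarrow> nat set" where
  "coin_set c \<omega> = {x. x \<ge> 1 \<and> \<omega> (class_rep c x) = class_side c x}"

lemma window_event_in_coins [measurable]: "window_event c w i \<in> coins.events"
  unfolding window_event_def by (rule pattern_event_in_coins) simp

lemma mem_window_event_iff:
  assumes "i \<ge> 1"
  shows "\<omega> \<in> window_event c w i \<longleftrightarrow> (\<forall>j < length w. (i + j \<in> coin_set c \<omega>) = w ! j)"
proof -
  have "(\<forall>x\<in>{i..<i + length w}. P x) \<longleftrightarrow> (\<forall>j < length w. P (i + j))" for P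
    by (metis atLeastLessThan_iff le_add1 le_add_diff_inverse add_less_cancel_left)
  then show ?thesis
    using assms unfolding window_event_def pattern_event_def coin_set_def by auto
qed

lemma prob_window_event:
  assumes "inj_on (class_rep c) {i..<i + length w}"
  shows "coins.prob (window_event c w i) = (1 / 2) ^ length w"
  unfolding window_event_def using prob_coins_pattern_inj[OF _ assms] by simp

lemma prob_window_event_Int:
  assumes "\<not> windows_overlap c (length w) i j"
  shows "coins.prob (window_event c w i \<inter> window_event c w j) =
    coins.prob (window_event c w i) * coins.prob (window_event c w j)"
  unfolding window_event_def using assms
  by (intro prob_coins_pattern_Int) (simp_all add: windows_overlap_def)

lemma mean_window_events_tendsto:
  fixes c :: nat and w :: "bool list"
  assumes "c > 0"
  defines "p \<equiv> (1 / 2 :: real) ^ length w"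
  shows "(\<lambda>N. (\<Sum>i=1..N. coins.prob (window_event c w i)) / N) \<longlonglongrightarrow> p"
proof -
  let ?L = "length w"
  let ?K = "real ?L * (?L * c)"
  have "0 \<le> p" "p \<le> 1" unfolding p_def by (simp_all add: power_le_one)
  then have prob_dist_le_1: "\<bar>coins.prob (window_event c w i) - p\<bar> \<le> 1" for i
    using coins.prob_le_1[of "window_event c w i"] measure_nonneg[of coins "window_event c w i"]
    unfolding abs_le_iff by linarith
  define bad where "bad N = {i \<in> {1..N}. \<not> inj_on (class_rep c) {i..<i + ?L}}" for N
  have "\<bar>(\<Sum>i=1..N. coins.prob (window_event c w i)) - N * p\<bar> \<le> ?K * sqrt (N + ?L)" for N
  proof -
    have "(\<Sum>i=1..N. coins.prob (window_event c w i)) - N * p =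
        (\<Sum>i=1..N. coins.prob (window_event c w i) - p)"
      by (simp add: sum_subtractf)
    also have "\<dots> = (\<Sum>i\<in>bad N. coins.prob (window_event c w i) - p)"
      by (rule sum.mono_neutral_right) (auto simp: bad_def p_def prob_window_event)
    also have "\<bar>\<dots>\<bar> \<le> (\<Sum>i\<in>bad N. 1)"
      using sum_abs[of "\<lambda>i. coins.prob (window_event c w i) - p" "bad N"]
      by (rule order_trans) (intro sum_mono prob_dist_le_1)
    also have "\<dots> \<le> ?K * sqrt (N + ?L)"
      using card_non_injective_windows_le[OF assms(1), of N ?L] by (simp add: bad_def)
    finally show ?thesis .
  qed
  then show ?thesis
    by (rule tendsto_div_of_sqrt_deviation)
qed

lemma variance_window_events_le:
  fixes c N :: nat and w :: "bool list"
  assumes "c > 0"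
  shows "coins.variance (\<lambda>\<omega>. \<Sum>i=1..N. indicator (window_event c w i) \<omega>)
    \<le> real (2 * length w ^ 2 * (1 + length w) ^ 2) * N * sqrt N"
proof (cases "N = 0")
  case False
  let ?L = "length w" and ?l = "real (length w)"
  have "coins.variance (\<lambda>\<omega>. \<Sum>i=1..N. indicator (window_event c w i) \<omega>) \<le>
      card {(i, j) \<in> {1..N} \<times> {1..N}. windows_overlap c ?L i j}"
    by (intro coins.variance_sum_indicator_le prob_window_event_Int) auto
  also have "\<dots> \<le> ?L ^ 2 * (2 * (N + ?L) * sqrt (N + ?L))"
    by (rule card_overlapping_windows_le[OF assms])
  also have "\<dots> \<le> ?l ^ 2 * (2 * ((1 + ?l) * N) * ((1 + ?l) * sqrt N))"
  proof -
    have "?l * 1 \<le> ?l * N"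
      using False by (intro mult_left_mono) auto
    then have N_le: "N + ?l \<le> (1 + ?l) * N"
      by (simp add: algebra_simps)
    also have "\<dots> \<le> (1 + ?l) ^ 2 * N"
      by (intro mult_right_mono) (simp_all add: power2_eq_square)
    finally have "sqrt (N + ?l) \<le> sqrt ((1 + ?l) ^ 2 * N)"
      by (rule real_sqrt_le_mono)
    also have "\<dots> = (1 + ?l) * sqrt N"
      by (simp add: real_sqrt_mult)
    finally have "sqrt (N + ?l) \<le> (1 + ?l) * sqrt N" .
    with N_le show ?thesis
      by (intro mult_left_mono mult_mono) simp_all
  qed
  also have "\<dots> = real (2 * ?L ^ 2 * (1 + ?L) ^ 2) * N * sqrt N"
    by (simp add: power2_eq_square algebra_simps)
  finally show ?thesis .
qed simp

lemma AE_normal_coin_set: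
  assumes "c > 0"
  shows "AE \<omega> in coins. normal_set (coin_set c \<omega>)"
  unfolding normal_set_def normal_seq_def
proof (subst AE_all_countable, intro allI)
  fix w :: "bool list"
  have "AE \<omega> in coins. (\<lambda>N. card {i \<in> {1..N}. \<omega> \<in> window_event c w i} / N) \<longlonglongrightarrow> (1 / 2) ^ length w"
    by (rule coins.AE_frequency_tendsto[OF window_event_in_coins
          mean_window_events_tendsto[OF assms] variance_window_events_le[OF assms]])
  moreover have "{i \<in> {1..N}. \<omega> \<in> window_event c w i} =
      {i \<in> {1..N}. \<forall>j < length w. (i + j \<in> coin_set c \<omega>) = w ! j}" for N \<omega>
    by (auto simp: mem_window_event_iff)
  ultimately show "AE \<omega> in coins. (\<lambda>N. real (card {i \<in> {1..N}.
      \<forall>j < length w. (i + j \<in> coin_set c \<omega>) = w ! j}) / real N) \<longlonglongrightarrow> (1 / 2) ^ length w"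
    by simp
qed

lemma coin_set_avoids_products:
  fixes c k n x y :: nat
  assumes "\<not> (\<exists>m. c = m ^ 2)" "even k"
    and "x \<in> coin_set c \<omega>" "y \<in> coin_set c \<omega>"
  shows "x * y \<noteq> c * n ^ k"
proof
  assume "x * y = c * n ^ k"
  with assms have "class_rep c x = class_rep c y" "class_side c x \<noteq> class_side c y"
    using same_class_opposite_sides[of c k x y n] by (auto simp: coin_set_def)
  with assms(3,4) show False by (simp add: coin_set_def)
qed

theorem mainTheorem4:
  fixes c k :: nat
  assumes "c > 0" "k > 0"
    and "\<not> (\<exists>m::nat. c = m ^ 2)"
    and "even k"
  shows "\<exists>A :: nat set. A \<subseteq> {1..} \<and> normal_set A \<and>
           (\<forall>x\<in>A. \<forall>y\<in>A. \<forall>n::nat. n \<ge> 1 \<longrightarrow> x * y \<noteq> c * n ^ k)"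
proof -
  obtain \<omega> where "normal_set (coin_set c \<omega>)"
    using eventually_happens'[OF coins.ae_filter_bot AE_normal_coin_set[OF assms(1)]] by blast
  moreover have "coin_set c \<omega> \<subseteq> {1..}"
    by (auto simp: coin_set_def)
  ultimately show ?thesis
    using coin_set_avoids_products[OF assms(3,4)] by blast
qed

end
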